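(* Let $R$ be a ring with unity and involution $*$, and let $a,b,c\in R$. The following statements are equivalent. (1) $a$ is left dual $(b,c)$-core invertible. (2) $a$ is left $(b,c)$-invertible and $b$ is $\{1,4\}$-invertible. (3) $a$ is left $(b,c)$-invertible and $ab$ is $\{1,4\}$-invertible. (4) $a$ is left $(b,c)$-invertible and $cab$ is $\{1,4\}$-invertible. In this case, for any left $(b,c)$-inverse $a_l^{(b,c)}$ of $a$ and any $\{1,4\}$-inverses $b^{(1,4)}$, $(ab)^{(1,4)}$, $(cab)^{(1,4)}$ of $b$, $ab$, $cab$ respectively, each of the elements $b^{(1,4)}a_l^{(b,c)}$, $(ab)^{(1,4)}a\,a_l^{(b,c)}$ and $(cab)^{(1,4)}c$ is a left dual $(b,c)$-core inverse of $a$.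
   Context: An element $a\in R$ is called left dual $(b,c)$-core invertible if there exists $x\in Rc$ such that $bxab=b$ and $(xab)^*=xab$; such an $x$ is called a left dual $(b,c)$-core inverse of $a$. The element $a$ is left $(b,c)$-invertible if $b\in Rcab$, equivalently there exists $x\in Rc$ with $xab=b$; any such $x$ is a left $(b,c)$-inverse of $a$, denoted $a_l^{(b,c)}$. An element $y$ is $\{1,4\}$-invertible if there exists $z$ with $yzy=y$ and $(zy)^*=zy$; such $z$ is a $\{1,4\}$-inverse of $y$. *)

theory Defs
  imports Main
begin

definition involution :: "('a::ring_1 \<Rightarrow> 'a) \<Rightarrow> bool" where
  "involution st \<longleftrightarrow>
     (\<forall>x y. st (x + y) = st x + st y) \<and>
     (\<forall>x y. st (x * y) = st y * st x) \<and>
     (\<forall>x. st (st x) = x)"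

definition left_dual_bc_core_inverse ::
  "('a::ring_1 \<Rightarrow> 'a) \<Rightarrow> 'a \<Rightarrow> 'a \<Rightarrow> 'a \<Rightarrow> 'a \<Rightarrow> bool" where
  "left_dual_bc_core_inverse st a b c x \<longleftrightarrow>
     (\<exists>r. x = r * c) \<and> b * x * a * b = b \<and> st (x * a * b) = x * a * b"

definition left_dual_bc_core_invertible ::
  "('a::ring_1 \<Rightarrow> 'a) \<Rightarrow> 'a \<Rightarrow> 'a \<Rightarrow> 'a \<Rightarrow> bool" where
  "left_dual_bc_core_invertible st a b c \<longleftrightarrow> (\<exists>x. left_dual_bc_core_inverse st a b c x)"

definition left_bc_inverse :: "'a::ring_1 \<Rightarrow> 'a \<Rightarrow> 'a \<Rightarrow> 'a \<Rightarrow> bool" where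
  "left_bc_inverse a b c x \<longleftrightarrow> (\<exists>r. x = r * c) \<and> x * a * b = b"

definition left_bc_invertible :: "'a::ring_1 \<Rightarrow> 'a \<Rightarrow> 'a \<Rightarrow> bool" where
  "left_bc_invertible a b c \<longleftrightarrow> (\<exists>r. b = r * c * a * b)"

definition inverse_14 :: "('a::ring_1 \<Rightarrow> 'a) \<Rightarrow> 'a \<Rightarrow> 'a \<Rightarrow> bool" where
  "inverse_14 st y z \<longleftrightarrow> y * z * y = y \<and> st (z * y) = z * y"

definition invertible_14 :: "('a::ring_1 \<Rightarrow> 'a) \<Rightarrow> 'a \<Rightarrow> bool" where
  "invertible_14 st y \<longleftrightarrow> (\<exists>z. inverse_14 st y z)"

end

theory Submission
  imports Defs
begin

text \<open>A left dual (b,c)-core inverse x = r c of a yields the {1,4}-inverses x a of b,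
x of a b and r of c a b. Conversely, a left (b,c)-inverse y satisfies y a b = b, so
multiplying y on the left by a {1,4}-inverse of b (or by v a for a {1,4}-inverse v
of a b) gives a left dual (b,c)-core inverse; for c a b the {1,4}-inverse w itself
gives w c.\<close>

lemma left_bc_invertible_iff_ex_left_bc_inverse:
  "left_bc_invertible a b c \<longleftrightarrow> (\<exists>x. left_bc_inverse a b c x)"
  unfolding left_bc_invertible_def left_bc_inverse_def by metis

lemma left_dual_bc_core_inverse_imp_left_bc_invertible:
  assumes "left_dual_bc_core_inverse st a b c x"
  shows "left_bc_invertible a b c"
proof -
  from assms obtain r where "x = r * c" and "b * x * a * b = b"
    unfolding left_dual_bc_core_inverse_def by blast
  then have "b = (b * r) * c * a * b" by (simp add: mult.assoc)
  then show ?thesis unfolding left_bc_invertible_def by blast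
qed

lemma left_dual_bc_core_inverse_imp_inverse_14_b:
  assumes "left_dual_bc_core_inverse st a b c x"
  shows "inverse_14 st b (x * a)"
  using assms unfolding left_dual_bc_core_inverse_def inverse_14_def
  by (simp add: mult.assoc)

lemma left_dual_bc_core_inverse_imp_inverse_14_ab:
  assumes "left_dual_bc_core_inverse st a b c x"
  shows "inverse_14 st (a * b) x"
  using assms unfolding left_dual_bc_core_inverse_def inverse_14_def
  by (metis mult.assoc)

lemma left_dual_bc_core_inverse_imp_inverse_14_cab:
  assumes "left_dual_bc_core_inverse st a b c (r * c)"
  shows "inverse_14 st (c * a * b) r"
  using assms unfolding left_dual_bc_core_inverse_def inverse_14_def
  by (metis mult.assoc)

lemma left_dual_bc_core_inverseI_inverse_14_b:
  assumes "left_bc_inverse a b c x" and "inverse_14 st b u"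
  shows "left_dual_bc_core_inverse st a b c (u * x)"
proof -
  from assms(1) obtain r where "x = r * c" and "x * a * b = b"
    unfolding left_bc_inverse_def by blast
  moreover from this have "u * x * a * b = u * b" by (simp add: mult.assoc)
  ultimately show ?thesis using assms(2)
    unfolding left_dual_bc_core_inverse_def inverse_14_def by (metis mult.assoc)
qed

lemma left_dual_bc_core_inverseI_inverse_14_ab:
  assumes "left_bc_inverse a b c x" and "inverse_14 st (a * b) v"
  shows "left_dual_bc_core_inverse st a b c (v * a * x)"
proof -
  from assms(1) obtain r where x: "x = r * c" and xab: "x * a * b = b"
    unfolding left_bc_inverse_def by blast
  have vab: "v * a * x * a * b = v * a * b" using xab by (simp add: mult.assoc)
  have "b * (v * a * x) * a * b = x * (a * b * v * (a * b))"
    using vab xab by (metis mult.assoc)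
  also have "\<dots> = b" using assms(2) xab unfolding inverse_14_def by (simp add: mult.assoc)
  finally show ?thesis using assms(2) vab x
    unfolding left_dual_bc_core_inverse_def inverse_14_def by (metis mult.assoc)
qed

lemma left_dual_bc_core_inverseI_inverse_14_cab:
  assumes "left_bc_invertible a b c" and "inverse_14 st (c * a * b) w"
  shows "left_dual_bc_core_inverse st a b c (w * c)"
proof -
  from assms(1) obtain r where r: "b = r * c * a * b"
    unfolding left_bc_invertible_def by blast
  have "b * (w * c) * a * b = r * (c * a * b * w * (c * a * b))"
    using r by (metis mult.assoc)
  also have "\<dots> = b" using assms(2) r unfolding inverse_14_def by (simp add: mult.assoc)
  finally show ?thesis using assms(2)
    unfolding left_dual_bc_core_inverse_def inverse_14_def by (metis mult.assoc)
qed

theorem theorem2p6: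
  fixes st :: "'a::ring_1 \<Rightarrow> 'a" and a b c :: 'a
  assumes "involution st"
  shows "(left_dual_bc_core_invertible st a b c \<longleftrightarrow>
            left_bc_invertible a b c \<and> invertible_14 st b)
       \<and> (left_dual_bc_core_invertible st a b c \<longleftrightarrow>
            left_bc_invertible a b c \<and> invertible_14 st (a * b))
       \<and> (left_dual_bc_core_invertible st a b c \<longleftrightarrow>
            left_bc_invertible a b c \<and> invertible_14 st (c * a * b))
       \<and> (left_dual_bc_core_invertible st a b c \<longrightarrow>
            ((\<forall>x u. left_bc_inverse a b c x \<and> inverse_14 st b u \<longrightarrow>
                left_dual_bc_core_inverse st a b c (u * x))
          \<and> (\<forall>x v. left_bc_inverse a b c x \<and> inverse_14 st (a * b) v \<longrightarrow>
                left_dual_bc_core_inverse st a b c (v * a * x))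
          \<and> (\<forall>w. inverse_14 st (c * a * b) w \<longrightarrow>
                left_dual_bc_core_inverse st a b c (w * c))))"
proof -
  have core_imp_invertible_14: "left_bc_invertible a b c \<and> invertible_14 st b
      \<and> invertible_14 st (a * b) \<and> invertible_14 st (c * a * b)"
    if "left_dual_bc_core_invertible st a b c"
  proof -
    from that obtain r where "left_dual_bc_core_inverse st a b c (r * c)"
      unfolding left_dual_bc_core_invertible_def left_dual_bc_core_inverse_def by blast
    then show ?thesis unfolding invertible_14_def
      by (meson left_dual_bc_core_inverse_imp_left_bc_invertible
          left_dual_bc_core_inverse_imp_inverse_14_b left_dual_bc_core_inverse_imp_inverse_14_ab
          left_dual_bc_core_inverse_imp_inverse_14_cab)
  qed
  have core_if_invertible_14: "left_dual_bc_core_invertible st a b c"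
    if "left_bc_invertible a b c"
      and "invertible_14 st b \<or> invertible_14 st (a * b) \<or> invertible_14 st (c * a * b)"
  proof -
    from that(1) obtain x where "left_bc_inverse a b c x"
      using left_bc_invertible_iff_ex_left_bc_inverse by blast
    with that show ?thesis
      unfolding left_dual_bc_core_invertible_def invertible_14_def
      by (meson left_dual_bc_core_inverseI_inverse_14_b left_dual_bc_core_inverseI_inverse_14_ab
          left_dual_bc_core_inverseI_inverse_14_cab)
  qed
  show ?thesis
    using core_imp_invertible_14 core_if_invertible_14 left_dual_bc_core_inverseI_inverse_14_b
      left_dual_bc_core_inverseI_inverse_14_ab left_dual_bc_core_inverseI_inverse_14_cab
    by blast
qed

end
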